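(* Let $m,k,s$ be positive integers with $s\ge k$, and $\Sigma_W\in\mathbb{R}^{k\times k}$ symmetric positive definite with symmetric positive-definite square root $\Sigma_W^{1/2}$. On $\mathcal{Z}=\mathbb{R}^{m+s}\times\mathbb{R}^{(m+s)\times k}$, write $z=(y_x,y_\perp,w_x,w_\perp)$ with $y_x\in\mathbb{R}^m,y_\perp\in\mathbb{R}^s,w_x\in\mathbb{R}^{m\times k},w_\perp\in\mathbb{R}^{s\times k}$. For any $p\in\mathbb{R}$, define (wherever $w_\perp$ has full column rank and $\hat\gamma^{\mathrm{OLS}}\neq 0$) $$\hat\gamma^{\mathrm{OLS}}=(w_\perp'w_\perp)^{-1}w_\perp'y_\perp,\quad \hat\gamma=\left(1-p\,\frac{y_\perp'y_\perp-\|\hat\gamma^{\mathrm{OLS}}\|^2_{w_\perp'w_\perp}}{\|\hat\gamma^{\mathrm{OLS}}\|^2_{w_\perp'w_\perp}}\right)\hat\gamma^{\mathrm{OLS}},\quad d(z)=y_x-w_x\hat\gamma\in\mathbb{R}^m.$$ Let $G=\mathbb{R}^m\times O(m)\times O(k)\times O(s)$ act by $m_{\mathcal{Z}}(g,(y_x,y_\perp,w_x,w_\perp))=(g_xy_x+g_\mu,\ g_\perp y_\perp,\ g_xw_x\Sigma_W^{-1/2}g_W'\Sigma_W^{1/2},\ g_\perp w_\perp\Sigma_W^{-1/2}g_W'\Sigma_W^{1/2})$ on $\mathcal{Z}$ and $m_{\mathcal{A}}(g,a)=g_xa+g_\mu$ on $\mathcal{A}=\mathbb{R}^m$, for $g=(g_\mu,g_x,g_W,g_\perp)$.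 Then $d$ is invariant: $d(m_{\mathcal{Z}}(g,z))=m_{\mathcal{A}}(g,d(z))$ for all $g\in G$ and all $z$ in the domain of $d$.
   Context: $\|v\|_A=\sqrt{v'Av}$. $O(d)$ is the group of orthogonal $d\times d$ matrices. The map $d$ is the canonical-coordinate form of the paper's two-step shrinkage estimator of $\mu_x=q_x'x\beta$: with $s=n-m-1$, $y_x=q_x'Y$, $y_\perp=q_\perp'Y$, $w_x=q_x'W$, $w_\perp=q_\perp'W$ for an orthonormal basis $(q_{\mathbf{1}},q_x,q_\perp)$ of $\mathbb{R}^n$ adapted to $(\mathbf{1}_n,x)$, and $y_\perp'y_\perp-\|\hat\gamma^{\mathrm{OLS}}\|^2_{w_\perp'w_\perp}$ equals the sum of squared residuals of the regression of $Y$ on $\mathbf{1},X,W$. *)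

theory Defs
  imports "HOL-Analysis.Analysis"
begin

definition sym_pos_def :: "real^'k^'k \<Rightarrow> bool" where
  "sym_pos_def A \<longleftrightarrow> transpose A = A \<and> (\<forall>x. x \<noteq> 0 \<longrightarrow> x \<bullet> (A *v x) > 0)"

definition wnorm2 :: "real^'k^'k \<Rightarrow> real^'k \<Rightarrow> real" where
  "wnorm2 A v = v \<bullet> (A *v v)"

definition gamma_ols :: "real^'s \<Rightarrow> real^'k^'s \<Rightarrow> real^'k" where
  "gamma_ols yp wp = matrix_inv (transpose wp ** wp) *v (transpose wp *v yp)"

definition gamma_hat :: "real \<Rightarrow> real^'s \<Rightarrow> real^'k^'s \<Rightarrow> real^'k" where
  "gamma_hat p yp wp =
     (let g = gamma_ols yp wp; q = wnorm2 (transpose wp ** wp) g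
      in (1 - p * ((yp \<bullet> yp - q) / q)) *\<^sub>R g)"

definition dest :: "real \<Rightarrow> real^'m \<Rightarrow> real^'s \<Rightarrow> real^'k^'m \<Rightarrow> real^'k^'s \<Rightarrow> real^'m" where
  "dest p yx yp wx wp = yx - wx *v gamma_hat p yp wp"

definition in_dom :: "real^'s \<Rightarrow> real^'k^'s \<Rightarrow> bool" where
  "in_dom yp wp \<longleftrightarrow> rank wp = CARD('k) \<and> gamma_ols yp wp \<noteq> 0"

end

theory Submission
  imports Defs
begin

text \<open>
  The action on the nuisance coefficients is right multiplication of \<open>w_x\<close> and \<open>w_perp\<close> by
  the invertible matrix \<open>M = SigmaW^(-1/2) g_W' SigmaW^(1/2)\<close>. As \<open>g_perp\<close> is orthogonal, the
  Gram matrix \<open>w_perp' w_perp\<close> becomes \<open>M' (w_perp' w_perp) M\<close> and \<open>w_perp' y_perp\<close> becomes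
  \<open>M' w_perp' y_perp\<close>, so the OLS estimate \<open>gamma\<close> becomes \<open>M^(-1) gamma\<close>. Its weighted norm and
  \<open>y_perp' y_perp\<close> are unchanged, hence so is the shrinkage factor, and the correction
  \<open>w_x gamma\<close> becomes \<open>g_x w_x M M^(-1) gamma = g_x (w_x gamma)\<close>. Thus \<open>g_x\<close> may be any matrix and
  \<open>g_W\<close> any invertible one.
\<close>

declare transpose_matrix_vector [simp del]

lemma inner_transpose_matrix_vector:
  "(x::real^'n) \<bullet> (transpose (B::real^'n^'m) *v y) = (B *v x) \<bullet> y"
  by (metis dot_lmul_matrix vector_transpose_matrix)

lemma matrix_inv:
  assumes "invertible (A::'a::semiring_1^'n^'m)"
  shows matrix_inv_right: "A ** matrix_inv A = mat 1"
    and matrix_inv_left: "matrix_inv A ** A = mat 1"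
proof -
  have "\<exists>A'. A ** A' = mat 1 \<and> A' ** A = mat 1"
    using assms invertible_def by blast
  then have "A ** matrix_inv A = mat 1 \<and> matrix_inv A ** A = mat 1"
    unfolding matrix_inv_def by (rule someI_ex)
  then show "A ** matrix_inv A = mat 1" "matrix_inv A ** A = mat 1" by auto
qed

lemma invertible_matrix_inv:
  assumes "invertible (A::'a::semiring_1^'n^'m)"
  shows "invertible (matrix_inv A)"
  using matrix_inv[OF assms] unfolding invertible_def by blast

lemma matrix_inv_unique:
  assumes "invertible (A::'a::semiring_1^'n^'n)" and "B ** A = mat 1"
  shows "matrix_inv A = B"
proof -
  have "matrix_inv A = B ** A ** matrix_inv A" using assms(2) by simp
  also have "\<dots> = B"
    by (metis assms(1) matrix_inv_right matrix_mul_assoc matrix_mul_rid)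
  finally show ?thesis .
qed

lemma matrix_inv_mult:
  assumes "invertible (A::'a::semiring_1^'n^'n)" and "invertible (B::'a^'n^'n)"
  shows "matrix_inv (A ** B) = matrix_inv B ** matrix_inv A"
proof (rule matrix_inv_unique)
  show "invertible (A ** B)" using assms by (rule invertible_mult)
  have "matrix_inv B ** matrix_inv A ** (A ** B) = matrix_inv B ** (matrix_inv A ** A) ** B"
    by (simp add: matrix_mul_assoc)
  then show "matrix_inv B ** matrix_inv A ** (A ** B) = mat 1"
    by (simp add: assms matrix_inv_left)
qed

lemma invertible_iff_kernel_trivial:
  "invertible (A::'a::field^'n^'n) \<longleftrightarrow> (\<forall>x. A *v x = 0 \<longrightarrow> x = 0)"
  by (simp add: invertible_left_inverse matrix_left_invertible_ker)

lemma sym_pos_def_invertible: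
  assumes "sym_pos_def A"
  shows "invertible A"
  unfolding invertible_iff_kernel_trivial
  using assms unfolding sym_pos_def_def by force

lemma invertible_gram_matrix:
  assumes "rank (W::real^'k^'s) = CARD('k)"
  shows "invertible (transpose W ** W)"
  unfolding invertible_iff_kernel_trivial
proof (intro allI impI)
  fix x assume "(transpose W ** W) *v x = 0"
  then have "(W *v x) \<bullet> (W *v x) = 0"
    by (metis inner_transpose_matrix_vector inner_zero_right matrix_vector_mul_assoc)
  then have "W *v x = W *v 0" by simp
  moreover have "inj ((*v) W)" using assms full_rank_injective by blast
  ultimately show "x = 0" by (meson injD)
qed

lemma gram_matrix_orthogonal_mult:
  assumes "orthogonal_matrix (U::real^'s^'s)"
  shows "transpose (U ** W ** M) ** (U ** W ** M) = transpose M ** (transpose W ** W) ** M"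
proof -
  have "transpose (U ** W ** M) ** (U ** W ** M)
      = transpose M ** transpose W ** (transpose U ** U) ** W ** M"
    by (simp add: matrix_transpose_mul matrix_mul_assoc)
  also have "\<dots> = transpose M ** (transpose W ** W) ** M"
    using assms unfolding orthogonal_matrix_def by (simp add: matrix_mul_assoc)
  finally show ?thesis .
qed

lemma inner_orthogonal_matrix:
  assumes "orthogonal_matrix (U::real^'s^'s)"
  shows "(U *v x) \<bullet> (U *v y) = x \<bullet> y"
  using assms unfolding orthogonal_matrix_def
  by (metis inner_transpose_matrix_vector matrix_vector_mul_assoc matrix_vector_mul_lid)

lemma wnorm2_congruence: "wnorm2 (transpose M ** A ** M) u = wnorm2 A (M *v u)"
  unfolding wnorm2_def
  by (simp add: matrix_vector_mul_assoc [symmetric] inner_transpose_matrix_vector)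

lemma gamma_ols_equivariant:
  assumes "orthogonal_matrix (U::real^'s^'s)" and "invertible (M::real^'k^'k)"
    and "invertible (transpose W ** W)"
  shows "gamma_ols (U *v y) (U ** W ** M) = matrix_inv M *v gamma_ols y W"
proof -
  let ?A = "transpose W ** W"
  have "transpose (U ** W ** M) *v (U *v y)
      = transpose M ** transpose W ** (transpose U ** U) *v y"
    by (simp add: matrix_transpose_mul matrix_mul_assoc matrix_vector_mul_assoc)
  also have "\<dots> = transpose M *v (transpose W *v y)"
    using assms(1) unfolding orthogonal_matrix_def by (simp add: matrix_vector_mul_assoc)
  finally have "gamma_ols (U *v y) (U ** W ** M)
      = matrix_inv (transpose M ** ?A ** M) *v (transpose M *v (transpose W *v y))"
    unfolding gamma_ols_def gram_matrix_orthogonal_mult[OF assms(1)] by simp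
  also have "\<dots> = matrix_inv M ** matrix_inv ?A ** (matrix_inv (transpose M) ** transpose M)
      *v (transpose W *v y)"
    using assms(2,3)
    by (simp add: matrix_inv_mult invertible_mult transpose_invertible matrix_vector_mul_assoc,
        simp add: matrix_mul_assoc)
  also have "\<dots> = matrix_inv M *v gamma_ols y W"
    using assms(2)
    by (simp add: gamma_ols_def matrix_inv_left transpose_invertible matrix_vector_mul_assoc
        matrix_mul_assoc)
  finally show ?thesis .
qed

lemma gamma_hat_equivariant:
  assumes "orthogonal_matrix (U::real^'s^'s)" and "invertible (M::real^'k^'k)"
    and "invertible (transpose W ** W)"
  shows "gamma_hat p (U *v y) (U ** W ** M) = matrix_inv M *v gamma_hat p y W"
proof -
  have "M *v (matrix_inv M *v v) = v" for v
    using assms(2) by (simp add: matrix_vector_mul_assoc matrix_inv_right)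
  then show ?thesis
    unfolding gamma_hat_def Let_def gamma_ols_equivariant[OF assms]
      gram_matrix_orthogonal_mult[OF assms(1)] wnorm2_congruence
      inner_orthogonal_matrix[OF assms(1)]
    by (simp add: matrix_vector_mult_scaleR)
qed

lemma dest_equivariant:
  assumes "orthogonal_matrix (U::real^'s^'s)" and "invertible (M::real^'k^'k)"
    and "invertible (transpose wp ** wp)"
  shows "dest p (G *v yx + mu) (U *v yp) (G ** wx ** M) (U ** wp ** M)
       = G *v dest p yx yp wx wp + mu"
proof -
  have "G ** wx ** M ** matrix_inv M = G ** wx"
    using assms(2) by (metis matrix_inv_right matrix_mul_assoc matrix_mul_rid)
  then have "(G ** wx ** M) *v (matrix_inv M *v v) = G *v (wx *v v)" for v
    by (simp add: matrix_vector_mul_assoc)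
  then show ?thesis
    unfolding dest_def gamma_hat_equivariant[OF assms]
    by (simp add: matrix_vector_mult_diff_distrib)
qed

theorem mainTheorem6:
  fixes p :: real
    and SigmaW SigmaWhalf :: "real^'k^'k"
    and g_mu :: "real^'m" and g_x :: "real^'m^'m" and g_W :: "real^'k^'k" and g_perp :: "real^'s^'s"
    and yx :: "real^'m" and yp :: "real^'s" and wx :: "real^'k^'m" and wp :: "real^'k^'s"
  assumes "CARD('s) \<ge> CARD('k)"
    and "sym_pos_def SigmaW"
    and "sym_pos_def SigmaWhalf"
    and "SigmaWhalf ** SigmaWhalf = SigmaW"
    and "orthogonal_matrix g_x" and "orthogonal_matrix g_W" and "orthogonal_matrix g_perp"
    and "in_dom yp wp"
  shows "dest p (g_x *v yx + g_mu) (g_perp *v yp)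
            (g_x ** wx ** matrix_inv SigmaWhalf ** transpose g_W ** SigmaWhalf)
            (g_perp ** wp ** matrix_inv SigmaWhalf ** transpose g_W ** SigmaWhalf)
         = g_x *v dest p yx yp wx wp + g_mu"
proof -
  define M where "M = matrix_inv SigmaWhalf ** transpose g_W ** SigmaWhalf"
  have "invertible SigmaWhalf" using assms(3) by (rule sym_pos_def_invertible)
  moreover have "invertible (transpose g_W)"
    using assms(6) unfolding orthogonal_matrix_def invertible_def
    by (metis matrix_transpose_mul transpose_mat transpose_transpose)
  ultimately have "invertible M"
    unfolding M_def by (intro invertible_mult invertible_matrix_inv)
  moreover have "invertible (transpose wp ** wp)"
    using assms(8) unfolding in_dom_def by (simp add: invertible_gram_matrix)
  ultimately have "dest p (g_x *v yx + g_mu) (g_perp *v yp) (g_x ** wx ** M) (g_perp ** wp ** M)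
      = g_x *v dest p yx yp wx wp + g_mu"
    using assms(7) by (intro dest_equivariant)
  then show ?thesis unfolding M_def by (simp add: matrix_mul_assoc)
qed

end
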